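(* Let $t$ and $n$ be positive integers. (1) If $t+2\equiv 0 \pmod 6$ and $t+2$ divides $n$, then $ex_3(n,Tr(K_{1,t}))=\frac{n}{6}(t^2-2)$. (2) If $t+2\equiv 1$ or $3 \pmod 6$ and $t+2$ divides $n$, then $ex_3(n,Tr(K_{1,t}))=\frac{n}{6}(t^2-1)$.
   Context: For a graph $F$ with vertex set $\{v_1,\dots,v_p\}$ and edge set $\{e_1,\dots,e_q\}$, a hypergraph $\mathcal{H}$ contains $F$ as a trace if there exist distinct vertices $w_1,\dots,w_p\in V(\mathcal{H})$ and distinct edges $f_1,\dots,f_q\in E(\mathcal{H})$ such that whenever $e_i=v_\alpha v_\beta$, we have $f_i\cap\{w_1,\dots,w_p\}=\{w_\alpha,w_\beta\}$. For $r\ge 2$, $ex_r(n,Tr(F))$ denotes the maximum number of edges of an $n$-vertex $r$-uniform hypergraph that does not contain $F$ as a trace. $K_{1,t}$ is the star with $t$ edges. *)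

theory Defs
  imports Complex_Main
begin

text \<open>A graph F is given by a vertex set VF and an edge set EF (2-element subsets of VF).\<close>
definition contains_trace :: "'a set set \<Rightarrow> 'v set \<Rightarrow> 'v set set \<Rightarrow> bool" where
  "contains_trace H VF EF \<longleftrightarrow>
     (\<exists>w f. inj_on w VF \<and> inj_on f EF \<and>
        (\<forall>e\<in>EF. f e \<in> H \<and> f e \<inter> w ` VF = w ` e))"

definition uniform_hypergraph :: "nat \<Rightarrow> nat \<Rightarrow> nat set set \<Rightarrow> bool" where
  "uniform_hypergraph n r H \<longleftrightarrow> (\<forall>e\<in>H. e \<subseteq> {0..<n} \<and> card e = r)"

definition ex_trace :: "nat \<Rightarrow> nat \<Rightarrow> 'v set \<Rightarrow> 'v set set \<Rightarrow> nat" where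
  "ex_trace r n VF EF =
     Max {card H | H. uniform_hypergraph n r H \<and> \<not> contains_trace H VF EF}"

definition star_V :: "nat \<Rightarrow> nat set" where
  "star_V t = {0..t}"
definition star_E :: "nat \<Rightarrow> nat set set" where
  "star_E t = {{0, i} | i. i \<in> {1..t}}"

end

theory Submission
  imports Defs "HOL-Library.Ramsey"
begin

(*
  If a 3-graph H has no trace of K_{1,t}, then for every vertex c the link graph
  of c has no set U of t vertices each of which has a link neighbour outside U: the vertex c,
  the set U and one such edge per vertex of U would form a trace. In a graph in which all such
  escaping sets have at most m vertices the degree sum is at most m(m + 2), so every vertex
  lies in at most (t^2 - 1)/2 edges, and in at most (t^2 - 2)/2 edges when t is even.

  Cut the vertex set into blocks of size t + 2 and take, inside every block, all
  triples except those of a family R of triples covering every pair. A trace centred at c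
  stays inside the block of c, where exactly one vertex y lies outside U and c; then {c, u, y}
  is an edge for every u in U, but the pair {c, y} lies in a removed triple {c, y, u}. With
  Steiner triple systems (Bose's construction for t + 2 = 3 mod 6, Skolem's for t + 2 = 1
  mod 6) and a covering by (t + 2)^2/6 triples for t + 2 = 0 mod 6 the two bounds agree.
*)

lemma sum_card_filter_swap:
  assumes "finite A" "finite B"
  shows "(\<Sum>a\<in>A. card {b\<in>B. P a b}) = (\<Sum>b\<in>B. card {a\<in>A. P a b})"
proof -
  have "(\<Sum>a\<in>A. card {b\<in>B. P a b}) = (\<Sum>a\<in>A. \<Sum>b\<in>B. if P a b then 1 else 0)"
    using assms(2) by (simp add: sum.If_cases Int_def)
  also have "\<dots> = (\<Sum>b\<in>B. \<Sum>a\<in>A. if P a b then 1 else 0)"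
    by (rule sum.swap)
  also have "\<dots> = (\<Sum>b\<in>B. card {a\<in>A. P a b})"
    using assms(1) by (simp add: sum.If_cases Int_def)
  finally show ?thesis .
qed

definition degree :: "('a \<Rightarrow> 'a \<Rightarrow> bool) \<Rightarrow> 'a set \<Rightarrow> 'a \<Rightarrow> nat" where
  "degree adj V x = card {y\<in>V. adj x y}"

definition escaping :: "('a \<Rightarrow> 'a \<Rightarrow> bool) \<Rightarrow> 'a set \<Rightarrow> 'a set \<Rightarrow> bool" where
  "escaping adj V U \<longleftrightarrow> U \<subseteq> V \<and> (\<forall>u\<in>U. \<exists>x\<in>V - U. adj u x)"

lemma escaping_subset: "escaping adj V U \<Longrightarrow> U' \<subseteq> U \<Longrightarrow> escaping adj V U'"
  unfolding escaping_def by blast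

lemma escaping_neighbourhood:
  "symp adj \<Longrightarrow> irreflp adj \<Longrightarrow> v \<in> V \<Longrightarrow> escaping adj V {y\<in>V. adj v y}"
  unfolding escaping_def symp_def irreflp_def by blast

lemma escaping_card_le_remainder:
  assumes "symp adj" "irreflp adj" "finite V" "v \<in> V"
    and bound: "\<And>U. escaping adj V U \<Longrightarrow> card U \<le> m"
    and U: "escaping adj (V - insert v {y\<in>V. adj v y}) U"
  shows "card U \<le> m - card {y\<in>V. adj v y}"
proof -
  let ?A = "{y\<in>V. adj v y}"
  have "escaping adj V (U \<union> ?A)"
    using assms(1,2,4) U unfolding escaping_def symp_def irreflp_def by blast
  then have "card (U \<union> ?A) \<le> m"
    by (rule bound)
  moreover have "card (U \<union> ?A) = card U + card ?A"
    using U \<open>finite V\<close> by (intro card_Un_disjoint) (auto simp: escaping_def intro: finite_subset)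
  ultimately show ?thesis
    by simp
qed

lemma degree_remainder_le:
  assumes "symp adj" "irreflp adj" "finite V" "v \<in> V"
    and bound: "\<And>U. escaping adj V U \<Longrightarrow> card U \<le> m"
    and a: "a \<in> {y\<in>V. adj v y}"
  shows "degree adj (V - insert v {y\<in>V. adj v y}) a \<le> m + 1 - card {y\<in>V. adj v y}"
proof -
  let ?A = "{y\<in>V. adj v y}"
  let ?N = "{x\<in>V - insert v ?A. adj a x}"
  have "escaping adj V (?A - {a} \<union> ?N)"
    using assms(1,2,4) a unfolding escaping_def symp_def irreflp_def by blast
  then have "card (?A - {a} \<union> ?N) \<le> m"
    by (rule bound)
  moreover have "card (?A - {a} \<union> ?N) = card ?A - 1 + card ?N"
    using a \<open>finite V\<close> by (subst card_Un_disjoint) auto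
  moreover have "card ?A \<ge> 1"
    using a \<open>finite V\<close> card_gt_0_iff[of ?A] by fastforce
  ultimately show ?thesis
    by (simp add: degree_def)
qed

lemma sum_degree_split:
  assumes "symp adj" "irreflp adj" "finite V" "v \<in> V"
  defines "A \<equiv> {y\<in>V. adj v y}" and "B \<equiv> V - insert v {y\<in>V. adj v y}"
  shows "(\<Sum>x\<in>V. degree adj V x)
    = degree adj V v + (\<Sum>x\<in>A. degree adj V x) + (\<Sum>x\<in>B. degree adj B x) + (\<Sum>a\<in>A. degree adj B a)"
proof -
  have fin: "finite A" "finite B"
    using \<open>finite V\<close> by (simp_all add: A_def B_def)
  have "v \<notin> A"
    using \<open>irreflp adj\<close> by (simp add: A_def irreflp_def)
  then have "V = insert v (A \<union> B)" "v \<notin> A \<union> B" "A \<inter> B = {}"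
    using \<open>v \<in> V\<close> by (auto simp: A_def B_def)
  then have "(\<Sum>x\<in>V. degree adj V x) = degree adj V v + (\<Sum>x\<in>A. degree adj V x) + (\<Sum>x\<in>B. degree adj V x)"
    using fin by (simp add: sum.union_disjoint)
  moreover have "degree adj V x = degree adj B x + card {a\<in>A. adj x a}" if "x \<in> B" for x
  proof -
    have "{y\<in>V. adj x y} = {y\<in>B. adj x y} \<union> {a\<in>A. adj x a}"
      using that \<open>symp adj\<close> by (auto simp: A_def B_def symp_def)
    moreover have "card ({y\<in>B. adj x y} \<union> {a\<in>A. adj x a}) = degree adj B x + card {a\<in>A. adj x a}"
      unfolding degree_def using \<open>finite V\<close> by (intro card_Un_disjoint) (auto simp: A_def B_def)
    ultimately show ?thesis
      by (simp add: degree_def)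
  qed
  then have "(\<Sum>x\<in>B. degree adj V x) = (\<Sum>x\<in>B. degree adj B x) + (\<Sum>x\<in>B. card {a\<in>A. adj x a})"
    by (simp add: sum.distrib)
  moreover have "(\<Sum>x\<in>B. card {a\<in>A. adj x a}) = (\<Sum>a\<in>A. degree adj B a)"
  proof -
    have "{x\<in>B. adj x a} = {x\<in>B. adj a x}" for a
      using \<open>symp adj\<close> by (auto dest: sympD)
    then show ?thesis
      using sum_card_filter_swap[OF fin(2,1), of "\<lambda>x a. adj x a"] by (simp add: degree_def)
  qed
  ultimately show ?thesis
    by simp
qed

lemma sum_degree_le_if_escaping_le:
  assumes "finite V" and sym: "symp adj" and irrefl: "irreflp adj"
    and "\<And>U. escaping adj V U \<Longrightarrow> card U \<le> m"
  shows "(\<Sum>x\<in>V. degree adj V x) \<le> m * (m + 2)"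
  using assms(1,4)
proof (induction "card V" arbitrary: V m rule: less_induct)
  case less
  note bound = less.prems(2)
  show ?case
  proof (cases "V = {}")
    case False
    obtain v where v: "v \<in> V" and v_Max: "Max (degree adj V ` V) = degree adj V v"
      using obtains_MAX[OF \<open>finite V\<close> False] by blast
    have v_max: "degree adj V x \<le> degree adj V v" if "x \<in> V" for x
      using \<open>finite V\<close> that by (simp flip: v_Max)
    define A where "A = {y\<in>V. adj v y}"
    define B where "B = V - insert v A"
    have "degree adj V v = card A"
      by (simp add: degree_def A_def)
    have "card A \<le> m"
      unfolding A_def by (rule bound[OF escaping_neighbourhood[OF sym irrefl v]])
    have "(\<Sum>x\<in>B. degree adj B x) \<le> (m - card A) * (m - card A + 2)"
    proof (rule less.hyps)
      show "card B < card V" "finite B"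
        using \<open>finite V\<close> v by (auto simp: B_def intro: psubset_card_mono)
      show "card U \<le> m - card A" if "escaping adj B U" for U
        using escaping_card_le_remainder[of adj V v m U, OF sym irrefl \<open>finite V\<close> v bound] that
        by (simp add: A_def B_def)
    qed
    moreover have "(\<Sum>a\<in>A. degree adj B a) \<le> card A * (m + 1 - card A)"
    proof -
      have "degree adj B a \<le> m + 1 - card A" if "a \<in> A" for a
        using degree_remainder_le[of adj V v m a, OF sym irrefl \<open>finite V\<close> v bound] that
        by (simp add: A_def B_def)
      then show ?thesis
        using sum_mono[of A "degree adj B" "\<lambda>_. m + 1 - card A"] by simp
    qed
    moreover have "(\<Sum>x\<in>A. degree adj V x) \<le> card A * card A"
      using sum_mono[of A "degree adj V" "\<lambda>_. degree adj V v"] v_max \<open>degree adj V v = card A\<close>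
      by (auto simp: A_def)
    moreover have "card A + card A * card A + (m - card A) * (m - card A + 2) + card A * (m + 1 - card A)
        \<le> m * (m + 2)"
    proof -
      obtain r where "m = card A + r"
        using \<open>card A \<le> m\<close> le_Suc_ex by blast
      then show ?thesis
        by (simp add: algebra_simps)
    qed
    ultimately show ?thesis
      using sum_degree_split[OF sym irrefl \<open>finite V\<close> v] \<open>degree adj V v = card A\<close>
      unfolding A_def B_def by linarith
  qed simp
qed

lemma card_3_obtain_third:
  assumes "card e = 3" "a \<in> e" "b \<in> e" "a \<noteq> b"
  obtains y where "y \<noteq> a" "y \<noteq> b" "e = {a, b, y}"
proof -
  have "card (e - {a, b}) = 1"
    using assms by (simp add: card_Diff_subset)
  then obtain y where "e - {a, b} = {y}"
    by (meson card_1_singletonE)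
  then show ?thesis
    using that assms by blast
qed

definition link :: "'a set set \<Rightarrow> 'a \<Rightarrow> 'a \<Rightarrow> 'a \<Rightarrow> bool" where
  "link H c x y \<longleftrightarrow> x \<noteq> y \<and> x \<noteq> c \<and> y \<noteq> c \<and> {c, x, y} \<in> H"

lemma symp_link: "symp (link H c)"
  unfolding link_def symp_def by (auto simp: insert_commute)

lemma irreflp_link: "irreflp (link H c)"
  unfolding link_def irreflp_def by simp

lemma star_E_iff: "e \<in> star_E t \<longleftrightarrow> (\<exists>i\<in>{1..t}. e = {0, i})"
  unfolding star_E_def by auto

lemma uniform_hypergraph_edge:
  "uniform_hypergraph n r H \<Longrightarrow> e \<in> H \<Longrightarrow> e \<subseteq> {0..<n} \<and> card e = r"
  unfolding uniform_hypergraph_def by blast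

lemma finite_uniform_hypergraph: "uniform_hypergraph n r H \<Longrightarrow> finite H"
  unfolding uniform_hypergraph_def by (meson PowI finite_Pow_iff finite_atLeastLessThan finite_subset subsetI)

lemma uniform_hypergraph_iff_nsets: "uniform_hypergraph n r H \<longleftrightarrow> H \<subseteq> [{0..<n}]\<^bsup>r\<^esup>"
  unfolding uniform_hypergraph_def nsets_def by (auto intro: finite_subset)

lemma star_trace_imp_escaping_link:
  assumes H: "uniform_hypergraph n 3 H" and "contains_trace H (star_V t) (star_E t)"
  shows "\<exists>c U. card U = t \<and> escaping (link H c) {0..<n} U"
proof -
  obtain w f where inj_w: "inj_on w {0..t}"
    and f: "\<forall>e\<in>star_E t. f e \<in> H \<and> f e \<inter> w ` {0..t} = w ` e"
    using assms(2) unfolding contains_trace_def star_V_def by blast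
  define U where "U = w ` {1..t}"
  have "card U = t"
    unfolding U_def using inj_w by (simp add: card_image inj_on_subset)
  moreover have "escaping (link H (w 0)) {0..<n} U"
  proof -
    have exit: "w i \<in> {0..<n} \<and> (\<exists>x\<in>{0..<n} - U. link H (w 0) (w i) x)" if i: "i \<in> {1..t}" for i
    proof -
      have "{0, i} \<in> star_E t"
        using i by (auto simp: star_E_iff)
      then have e: "f {0, i} \<in> H" "f {0, i} \<inter> w ` {0..t} = {w 0, w i}"
        using f by auto
      have e3: "card (f {0, i}) = 3" and e_sub: "f {0, i} \<subseteq> {0..<n}"
        using uniform_hypergraph_edge[OF H e(1)] by auto
      have "w 0 \<noteq> w i"
        using inj_w i by (auto dest: inj_onD)
      moreover have "w 0 \<in> f {0, i}" "w i \<in> f {0, i}"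
        using e(2) by auto
      ultimately obtain x where x: "x \<noteq> w 0" "x \<noteq> w i" "f {0, i} = {w 0, w i, x}"
        by (metis card_3_obtain_third[OF e3])
      then have "x \<notin> w ` {0..t}"
        using e(2) by auto
      then have "x \<notin> U"
        by (auto simp: U_def)
      moreover have "link H (w 0) (w i) x"
        using x e(1) \<open>w 0 \<noteq> w i\<close> by (auto simp: link_def)
      ultimately show ?thesis
        using x e_sub by auto
    qed
    then show ?thesis
      unfolding escaping_def by (auto simp: U_def)
  qed
  ultimately show ?thesis
    by blast
qed

lemma contains_star_traceI:
  assumes inj_w: "inj_on w {0..t}"
    and edge: "\<And>i. i \<in> {1..t} \<Longrightarrow> g i \<in> H \<and> g i \<inter> w ` {0..t} = {w 0, w i}"
  shows "contains_trace H (star_V t) (star_E t)"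
proof -
  define f where "f e = g (Max e)" for e :: "nat set"
  have f: "f {0, i} = g i" for i
    by (simp add: f_def)
  have w0: "w 0 \<noteq> w i" if "i \<in> {1..t}" for i
    using inj_w that by (auto dest: inj_onD)
  have "inj_on f (star_E t)"
  proof (rule inj_onI)
    fix e e' assume "e \<in> star_E t" "e' \<in> star_E t" "f e = f e'"
    then obtain i j where i: "i \<in> {1..t}" "e = {0, i}" and j: "j \<in> {1..t}" "e' = {0, j}"
      and "g i = g j"
      by (auto simp: star_E_iff f)
    then have "{w 0, w i} = {w 0, w j}"
      using edge by metis
    then have "w i = w j"
      using w0[OF i(1)] w0[OF j(1)] by (metis doubleton_eq_iff)
    then have "i = j"
      using inj_w i j by (auto dest: inj_onD)
    then show "e = e'"
      using i j by simp
  qed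
  moreover have "f e \<in> H \<and> f e \<inter> w ` {0..t} = w ` e" if e: "e \<in> star_E t" for e
  proof -
    obtain i where i: "i \<in> {1..t}" "e = {0, i}"
      using e by (auto simp: star_E_iff)
    then show ?thesis
      using edge[OF i(1)] by (simp add: f)
  qed
  ultimately show ?thesis
    unfolding contains_trace_def star_V_def using inj_w by blast
qed

lemma escaping_link_imp_star_trace:
  assumes esc: "escaping (link H c) V U" and "finite U"
  shows "contains_trace H (star_V (card U)) (star_E (card U))"
proof -
  define t where "t = card U"
  obtain h where h: "bij_betw h {1..t} U"
    using ex_bij_betw_nat_finite_1[OF \<open>finite U\<close>] by (auto simp: t_def)
  have "\<forall>u\<in>U. \<exists>x. x \<notin> U \<and> link H c u x"
    using esc unfolding escaping_def by blast
  then obtain x where x: "\<forall>u\<in>U. x u \<notin> U \<and> link H c u (x u)"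
    by (auto dest!: bchoice)
  have "c \<notin> U"
    using x by (auto simp: link_def)
  define w where "w i = (if i = 0 then c else h i)" for i
  have h_U: "h i \<in> U" if "i \<in> {1..t}" for i
    using h that by (auto dest: bij_betw_apply)
  have w_image: "w ` {0..t} = insert c U"
  proof -
    have "{0..t} = insert 0 {1..t}"
      by auto
    moreover have "w ` {1..t} = h ` {1..t}"
      by (rule image_cong) (auto simp: w_def)
    moreover have "w 0 = c"
      by (simp add: w_def)
    ultimately show ?thesis
      using h by (simp add: bij_betw_def)
  qed
  show ?thesis
    unfolding t_def[symmetric]
  proof (rule contains_star_traceI)
    show "inj_on w {0..t}"
      using \<open>c \<notin> U\<close> \<open>finite U\<close> unfolding inj_on_iff_eq_card[OF finite_atLeastAtMost] w_image
      by (simp add: t_def)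
    fix i assume "i \<in> {1..t}"
    then show "{c, h i, x (h i)} \<in> H \<and> {c, h i, x (h i)} \<inter> w ` {0..t} = {w 0, w i}"
      using x h_U[of i] w_image by (auto simp: w_def link_def)
  qed
qed

lemma contains_star_trace_iff:
  assumes "uniform_hypergraph n 3 H"
  shows "contains_trace H (star_V t) (star_E t) \<longleftrightarrow> (\<exists>c U. card U = t \<and> escaping (link H c) {0..<n} U)"
  using star_trace_imp_escaping_link[OF assms] escaping_link_imp_star_trace
  by (metis escaping_def finite_atLeastLessThan finite_subset)

lemma card_link_neighbours:
  assumes H: "uniform_hypergraph n 3 H"
  shows "degree (link H c) {0..<n} x = card {e\<in>H. c \<in> e \<and> x \<in> e - {c}}"
proof (cases "x = c")
  case False
  have "bij_betw (\<lambda>y. {c, x, y}) {y\<in>{0..<n}. link H c x y} {e\<in>H. c \<in> e \<and> x \<in> e - {c}}"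
  proof (rule bij_betwI')
    fix e assume e: "e \<in> {e\<in>H. c \<in> e \<and> x \<in> e - {c}}"
    then have "card e = 3" "e \<subseteq> {0..<n}"
      using uniform_hypergraph_edge[OF H] by auto
    moreover obtain y where "y \<noteq> c" "y \<noteq> x" "e = {c, x, y}"
      using card_3_obtain_third[OF \<open>card e = 3\<close>, of c x] e by blast
    ultimately show "\<exists>y\<in>{y\<in>{0..<n}. link H c x y}. e = {c, x, y}"
      using e False by (auto simp: link_def)
  qed (auto simp: link_def doubleton_eq_iff insert_commute)
  then show ?thesis
    unfolding degree_def by (rule bij_betw_same_card)
qed (simp add: link_def degree_def)

lemma sum_link_degree:
  assumes H: "uniform_hypergraph n 3 H"
  shows "(\<Sum>x\<in>{0..<n}. degree (link H c) {0..<n} x) = 2 * card {e\<in>H. c \<in> e}"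
proof -
  have fin: "finite {e\<in>H. c \<in> e}"
    using finite_uniform_hypergraph[OF H] by simp
  have "(\<Sum>x\<in>{0..<n}. degree (link H c) {0..<n} x)
      = (\<Sum>x\<in>{0..<n}. card {e\<in>{e\<in>H. c \<in> e}. x \<in> e - {c}})"
  proof (rule sum.cong[OF refl])
    fix x
    show "degree (link H c) {0..<n} x = card {e\<in>{e\<in>H. c \<in> e}. x \<in> e - {c}}"
      unfolding card_link_neighbours[OF H] by (rule arg_cong[where f = card]) auto
  qed
  also have "\<dots> = (\<Sum>e\<in>{e\<in>H. c \<in> e}. card {x\<in>{0..<n}. x \<in> e - {c}})"
    using fin by (rule sum_card_filter_swap[OF finite_atLeastLessThan])
  also have "\<dots> = (\<Sum>e\<in>{e\<in>H. c \<in> e}. 2)"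
  proof (rule sum.cong)
    fix e assume "e \<in> {e\<in>H. c \<in> e}"
    then have "c \<in> e" "card e = 3" "e \<subseteq> {0..<n}"
      using uniform_hypergraph_edge[OF H] by auto
    moreover have "{x\<in>{0..<n}. x \<in> e - {c}} = e - {c}"
      using \<open>e \<subseteq> {0..<n}\<close> by auto
    ultimately show "card {x\<in>{0..<n}. x \<in> e - {c}} = 2"
      by (simp add: card_Diff_singleton_if)
  qed simp
  finally show ?thesis
    by simp
qed

lemma star_trace_free_degree_le:
  assumes H: "uniform_hypergraph n 3 H" and free: "\<not> contains_trace H (star_V t) (star_E t)"
    and "t > 0"
  shows "2 * card {e\<in>H. c \<in> e} \<le> t\<^sup>2 - 1"
proof -
  have "card U \<le> t - 1" if esc: "escaping (link H c) {0..<n} U" for U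
  proof (rule ccontr)
    assume "\<not> card U \<le> t - 1"
    then have "t \<le> card U"
      by linarith
    then obtain U' where "U' \<subseteq> U" "card U' = t"
      by (metis obtain_subset_with_card_n)
    then have "contains_trace H (star_V t) (star_E t)"
      using esc escaping_subset contains_star_trace_iff[OF H] by blast
    with free show False ..
  qed
  then have "(\<Sum>x\<in>{0..<n}. degree (link H c) {0..<n} x) \<le> (t - 1) * (t - 1 + 2)"
    by (intro sum_degree_le_if_escaping_le symp_link irreflp_link) auto
  also have "(t - 1) * (t - 1 + 2) = t\<^sup>2 - 1"
    using \<open>t > 0\<close> by (cases t) (auto simp: power2_eq_square)
  finally show ?thesis
    using sum_link_degree[OF H] by simp
qed

lemma card_le_if_degree_le:
  assumes H: "uniform_hypergraph n 3 H" and deg: "\<And>c. c < n \<Longrightarrow> 2 * card {e\<in>H. c \<in> e} \<le> X"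
  shows "6 * card H \<le> n * X"
proof -
  have "(\<Sum>c\<in>{0..<n}. card {e\<in>H. c \<in> e}) = (\<Sum>e\<in>H. card {c\<in>{0..<n}. c \<in> e})"
    using finite_uniform_hypergraph[OF H] by (rule sum_card_filter_swap[OF finite_atLeastLessThan])
  also have "\<dots> = (\<Sum>e\<in>H. 3)"
  proof (rule sum.cong[OF refl])
    fix e assume "e \<in> H"
    then have "e \<subseteq> {0..<n}" "card e = 3"
      using uniform_hypergraph_edge[OF H] by auto
    then have "{c\<in>{0..<n}. c \<in> e} = e" "card e = 3"
      by auto
    then show "card {c\<in>{0..<n}. c \<in> e} = 3"
      by simp
  qed
  finally have "6 * card H = (\<Sum>c\<in>{0..<n}. 2 * card {e\<in>H. c \<in> e})"
    by (simp add: sum_distrib_left[symmetric])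
  also have "\<dots> \<le> (\<Sum>c\<in>{0..<n}. X)"
    using deg by (intro sum_mono) auto
  finally show ?thesis
    by simp
qed

definition covers_pairs :: "'a set \<Rightarrow> 'a set set \<Rightarrow> bool" where
  "covers_pairs V R \<longleftrightarrow> (\<forall>a\<in>V. \<forall>b\<in>V. a \<noteq> b \<longrightarrow> (\<exists>T\<in>R. a \<in> T \<and> b \<in> T))"

definition pair_covering :: "'a set \<Rightarrow> 'a set set \<Rightarrow> bool" where
  "pair_covering V R \<longleftrightarrow> R \<subseteq> [V]\<^bsup>3\<^esup> \<and> covers_pairs V R"

definition disjoint_copies :: "nat \<Rightarrow> nat \<Rightarrow> nat set set \<Rightarrow> nat set set" where
  "disjoint_copies m d B = (\<Union>j<d. (`) ((+) (j * m)) ` B)"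

lemma disjoint_copies_subset_nsets:
  assumes "B \<subseteq> [{0..<m}]\<^bsup>r\<^esup>"
  shows "disjoint_copies m d B \<subseteq> [{0..<d * m}]\<^bsup>r\<^esup>"
proof
  fix S assume "S \<in> disjoint_copies m d B"
  then obtain j T where j: "j < d" and T: "T \<in> [{0..<m}]\<^bsup>r\<^esup>" and S: "S = (+) (j * m) ` T"
    using assms by (auto simp: disjoint_copies_def)
  have "j * m + m \<le> d * m"
    using j by (metis add_mult_distrib mult_1 mult_le_mono1 Suc_leI add.commute plus_1_eq_Suc)
  then have "S \<subseteq> {0..<d * m}"
    using T by (force simp: S nsets_def)
  then show "S \<in> [{0..<d * m}]\<^bsup>r\<^esup>"
    using T by (simp add: S nsets_def card_image)
qed

lemma mult_add_div: "y < m \<Longrightarrow> (j * m + y) div m = (j::nat)"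
  by (metis add.commute div_less div_mult_self1 add_0 gr_implies_not0)

lemma disjoint_copies_edge:
  assumes "B \<subseteq> Pow {0..<m}" "S \<in> disjoint_copies m d B" "x \<in> S"
  shows "\<exists>T\<in>B. S = (+) (x div m * m) ` T"
proof -
  obtain j T where "T \<in> B" "S = (+) (j * m) ` T"
    using assms(2) by (auto simp: disjoint_copies_def)
  moreover have "x div m = j"
  proof -
    obtain y where "y \<in> T" "x = j * m + y"
      using assms(3) \<open>S = _\<close> by blast
    moreover have "y < m"
      using assms(1) \<open>T \<in> B\<close> \<open>y \<in> T\<close> by force
    ultimately show ?thesis
      by (simp add: mult_add_div)
  qed
  ultimately show ?thesis
    by blast
qed

lemma card_disjoint_copies:
  assumes "B \<subseteq> [{0..<m}]\<^bsup>r\<^esup>" "r > 0"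
  shows "card (disjoint_copies m d B) = d * card B"
proof -
  have B: "B \<subseteq> Pow {0..<m}" "finite B" "{} \<notin> B"
    using assms finite_subset[OF assms(1) finite_imp_finite_nsets] by (auto simp: nsets_def)
  have "card (disjoint_copies m d B) = (\<Sum>j<d. card ((`) ((+) (j * m)) ` B))"
    unfolding disjoint_copies_def
  proof (rule card_UN_disjoint)
    show "\<forall>i\<in>{..<d}. \<forall>j\<in>{..<d}. i \<noteq> j \<longrightarrow> (`) ((+) (i * m)) ` B \<inter> (`) ((+) (j * m)) ` B = {}"
    proof (intro ballI impI equals0I)
      fix i j S assume "i \<noteq> j" and S: "S \<in> (`) ((+) (i * m)) ` B \<inter> (`) ((+) (j * m)) ` B"
      then obtain T T' where T: "T \<in> B" "S = (+) (i * m) ` T" and T': "T' \<in> B" "S = (+) (j * m) ` T'"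
        by blast
      obtain x where "x \<in> T"
        using T(1) B(3) by (metis ex_in_conv)
      then obtain y where "y \<in> T'" and xy: "i * m + x = j * m + y"
        using T(2) T'(2) by (metis imageE imageI)
      have "x < m" "y < m"
        using B(1) T(1) T'(1) \<open>x \<in> T\<close> \<open>y \<in> T'\<close> by force+
      then have "i = j"
        using xy by (metis mult_add_div)
      with \<open>i \<noteq> j\<close> show False ..
    qed
  qed (use B in auto)
  also have "\<dots> = (\<Sum>j<d. card B)"
    by (intro sum.cong refl card_image inj_on_image) simp
  finally show ?thesis
    by simp
qed

lemma pair_covering_third:
  assumes R: "pair_covering V R" and "a \<in> V" "b \<in> V" "a \<noteq> b"
  obtains z where "z \<in> V" "z \<noteq> a" "z \<noteq> b" "{a, b, z} \<in> R"
proof -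
  obtain T where T: "T \<in> R" "a \<in> T" "b \<in> T"
    using assms unfolding pair_covering_def covers_pairs_def by blast
  then have "T \<subseteq> V" "card T = 3"
    using R unfolding pair_covering_def nsets_def by blast+
  obtain z where z: "z \<noteq> a" "z \<noteq> b" "T = {a, b, z}"
    by (rule card_3_obtain_third[OF \<open>card T = 3\<close> T(2,3) \<open>a \<noteq> b\<close>])
  show ?thesis
  proof (rule that)
    show "z \<in> V"
      using z(3) \<open>T \<subseteq> V\<close> by simp
    show "{a, b, z} \<in> R"
      using z(3) T(1) by simp
  qed (fact z(1), fact z(2))
qed

lemma escaping_unique_exit:
  assumes esc: "escaping adj V U" and exits: "\<And>u x. adj u x \<Longrightarrow> x \<in> W"
    and "U \<subseteq> W" "finite W" "card W = card U + 1"
  shows "\<exists>y. W - U = {y} \<and> (\<forall>u\<in>U. adj u y)"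
proof -
  have "finite U"
    using \<open>U \<subseteq> W\<close> \<open>finite W\<close> by (rule finite_subset)
  then have "card (W - U) = 1"
    using assms(3,5) by (simp add: card_Diff_subset)
  then obtain y where y: "W - U = {y}"
    by (rule card_1_singletonE)
  have "adj u y" if "u \<in> U" for u
  proof -
    have "\<exists>x\<in>V - U. adj u x"
      using esc that by (simp add: escaping_def)
    then obtain x where "x \<notin> U" "adj u x"
      by blast
    then have "x \<in> W - U"
      using exits[OF \<open>adj u x\<close>] by simp
    then have "x = y"
      using y by simp
    then show ?thesis
      using \<open>adj u x\<close> by simp
  qed
  then show ?thesis
    using y by blast
qed

lemma link_disjoint_copies_block:
  assumes B: "B \<subseteq> Pow {0..<m}" and "link (disjoint_copies m d B) c u x"
  shows "x \<in> (+) (c div m * m) ` {0..<m}"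
proof -
  have "{c, u, x} \<in> disjoint_copies m d B"
    using assms(2) by (simp add: link_def)
  then obtain T where "T \<in> B" and T: "{c, u, x} = (+) (c div m * m) ` T"
    using disjoint_copies_edge[OF B, of "{c, u, x}" d c] by blast
  then have "(+) (c div m * m) ` T \<subseteq> (+) (c div m * m) ` {0..<m}"
    using B by (intro image_mono) blast
  then show ?thesis
    using T by blast
qed

lemma star_trace_free_disjoint_copies:
  assumes R: "pair_covering {0..<t + 2} R" and "t > 0"
  shows "\<not> contains_trace (disjoint_copies (t + 2) d ([{0..<t + 2}]\<^bsup>3\<^esup> - R)) (star_V t) (star_E t)"
proof
  define m where "m = t + 2"
  define H where "H = disjoint_copies m d ([{0..<m}]\<^bsup>3\<^esup> - R)"
  have B: "[{0..<m}]\<^bsup>3\<^esup> - R \<subseteq> Pow {0..<m}"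
    by (auto simp: nsets_def)
  have "uniform_hypergraph (d * m) 3 H"
    unfolding uniform_hypergraph_iff_nsets H_def by (rule disjoint_copies_subset_nsets) blast
  moreover assume "contains_trace (disjoint_copies (t + 2) d ([{0..<t + 2}]\<^bsup>3\<^esup> - R)) (star_V t) (star_E t)"
  ultimately obtain c U where "card U = t" and esc: "escaping (link H c) {0..<d * m} U"
    using contains_star_trace_iff by (metis H_def m_def)
  define base where "base = c div m * m"
  define block where "block = (+) base ` {0..<m}"
  have link_block: "x \<in> block - {c}" if "link H c u x" for u x
  proof -
    have "x \<in> block"
      using link_disjoint_copies_block[OF B] that unfolding H_def block_def base_def by blast
    moreover have "x \<noteq> c"
      using that by (simp add: link_def)
    ultimately show ?thesis
      by blast
  qed
  define c' where "c' = c mod m"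
  have c': "c = base + c'" "c' < m"
    by (simp_all add: base_def c'_def) (simp add: m_def)
  then have "c \<in> block"
    unfolding block_def by (metis atLeastLessThan_iff image_eqI zero_le)
  have U_block: "U \<subseteq> block - {c}"
  proof
    fix u assume "u \<in> U"
    then obtain x where "link H c u x"
      using esc unfolding escaping_def by blast
    then have "link H c x u"
      by (rule sympD[OF symp_link])
    then show "u \<in> block - {c}"
      by (rule link_block)
  qed
  have "finite (block - {c})"
    by (simp add: block_def)
  have "card (block - {c}) = card U + 1"
    using \<open>c \<in> block\<close> \<open>card U = t\<close> by (simp add: block_def card_image m_def)
  with esc link_block U_block \<open>finite (block - {c})\<close>
  have "\<exists>y. block - {c} - U = {y} \<and> (\<forall>u\<in>U. link H c u y)"
    by (rule escaping_unique_exit)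
  then obtain y where y: "block - {c} - U = {y}" and link_y: "\<forall>u\<in>U. link H c u y"
    by blast
  then have "y \<in> block" "y \<noteq> c"
    by auto
  from \<open>y \<in> block\<close> obtain y' where y': "y = base + y'" "y' \<in> {0..<m}"
    unfolding block_def by (rule imageE)
  then have "c' \<noteq> y'"
    using c'(1) \<open>y \<noteq> c\<close> by auto
  obtain z' where z': "z' \<in> {0..<m}" "z' \<noteq> c'" "z' \<noteq> y'" "{c', y', z'} \<in> R"
    by (rule pair_covering_third[OF R[folded m_def], of c' y']) (use c'(2) y'(2) \<open>c' \<noteq> y'\<close> in auto)
  have "base + z' \<in> block - {c}" "base + z' \<noteq> y"
    using z'(1-3) c'(1) y'(1) unfolding block_def by auto
  then have "base + z' \<in> U"
    using y by blast
  then have "{c, base + z', y} \<in> H"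
    using link_y unfolding link_def by blast
  then obtain T where "T \<in> [{0..<m}]\<^bsup>3\<^esup> - R" "{c, base + z', y} = (+) base ` T"
    using disjoint_copies_edge[OF B, of _ d c] unfolding H_def base_def by blast
  moreover have "{c, base + z', y} = (+) base ` {c', y', z'}"
    using c'(1) y'(1) by (simp add: insert_commute)
  ultimately have "(+) base ` T = (+) base ` {c', y', z'}"
    by simp
  then have "T = {c', y', z'}"
    by (simp only: inj_image_eq_iff[OF inj_on_add])
  with \<open>T \<in> _\<close> \<open>{c', y', z'} \<in> R\<close> show False
    by blast
qed

definition point :: "nat \<Rightarrow> nat \<Rightarrow> nat \<Rightarrow> nat" where
  "point q i y = i * q + y"

lemma point_eq_iff [simp]:
  assumes "y < q" "y' < q"
  shows "point q i y = point q i' y' \<longleftrightarrow> i = i' \<and> y = y'"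
proof
  assume eq: "point q i y = point q i' y'"
  then have "i = i'"
    using assms mult_add_div unfolding point_def by metis
  with eq show "i = i' \<and> y = y'"
    by (simp add: point_def)
qed simp

lemma point_less:
  assumes "i < 3" "y < q"
  shows "point q i y < 3 * q"
proof -
  have "point q i y < (i + 1) * q"
    using assms(2) by (simp add: point_def)
  also have "\<dots> \<le> 3 * q"
    using assms(1) by (intro mult_right_mono) auto
  finally show ?thesis .
qed

lemma point_cases:
  assumes "a < 3 * q"
  obtains i y where "i < 3" "y < q" "a = point q i y"
proof
  show "a div q < 3" "a mod q < q" "a = point q (a div q) (a mod q)"
    using assms by (auto simp: point_def less_mult_imp_div_less mult.commute)
qed

lemma next_layer_cases:
  assumes "i < 3" "j < (3::nat)" "i \<noteq> j"
  shows "j = Suc i mod 3 \<or> i = Suc j mod 3"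
proof -
  have "i \<in> {0, 1, 2}" "j \<in> {0, 1, 2}"
    using assms(1,2) by auto
  then show ?thesis
    using assms(3) by auto
qed

lemma double_sum_lessThan: "2 * (\<Sum>z<q. z) = q * (q - 1 :: nat)"
proof (induction q)
  case (Suc q)
  then show ?case
    by (cases q) (simp_all add: algebra_simps)
qed simp

definition quasigroup_triples :: "nat \<Rightarrow> (nat \<Rightarrow> nat) \<Rightarrow> nat set set" where
  "quasigroup_triples q \<sigma> =
     (\<lambda>(i, z, y). {point q i y, point q i z, point q (Suc i mod 3) (\<sigma> ((y + z) mod q))})
       ` ({..<3} \<times> (SIGMA z:{..<q}. {..<z}))"

lemma quasigroup_triple_mem:
  assumes "i < 3" "y < q" "z < q" "y \<noteq> z"
  shows "{point q i y, point q i z, point q (Suc i mod 3) (\<sigma> ((y + z) mod q))} \<in> quasigroup_triples q \<sigma>"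
proof (cases "y < z")
  case True
  then show ?thesis
    unfolding quasigroup_triples_def using assms by (intro image_eqI[where x = "(i, z, y)"]) auto
next
  case False
  then show ?thesis
    unfolding quasigroup_triples_def using assms
    by (intro image_eqI[where x = "(i, y, z)"]) (auto simp: insert_commute add.commute)
qed

lemma quasigroup_triples_subset_nsets:
  assumes "\<And>w. w < q \<Longrightarrow> \<sigma> w < q"
  shows "quasigroup_triples q \<sigma> \<subseteq> [{0..<3 * q}]\<^bsup>3\<^esup>"
proof
  fix T assume "T \<in> quasigroup_triples q \<sigma>"
  then obtain i z y where iyz: "i < 3" "y < z" "z < q"
    and T: "T = {point q i y, point q i z, point q (Suc i mod 3) (\<sigma> ((y + z) mod q))}"
    unfolding quasigroup_triples_def by auto
  have "\<sigma> ((y + z) mod q) < q"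
    using assms iyz by simp
  moreover have "Suc i mod 3 \<noteq> i"
    using iyz(1) by presburger
  ultimately show "T \<in> [{0..<3 * q}]\<^bsup>3\<^esup>"
    using iyz point_less[of i] point_less[of "Suc i mod 3"] by (auto simp: T nsets_def card_insert_if)
qed

lemma card_quasigroup_triples: "2 * card (quasigroup_triples q \<sigma>) \<le> 3 * q * (q - 1)"
proof -
  have "card (quasigroup_triples q \<sigma>) \<le> card ({..<3::nat} \<times> (SIGMA z:{..<q}. {..<z}))"
    unfolding quasigroup_triples_def by (rule card_image_le) simp
  also have "\<dots> = 3 * (\<Sum>z<q. z)"
    by (simp add: card_cartesian_product card_SigmaI)
  finally show ?thesis
    using double_sum_lessThan[of q] by linarith
qed

context
  fixes q :: nat and \<sigma> :: "nat \<Rightarrow> nat" and S :: "nat set set"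
  assumes \<sigma>_onto: "\<And>x. x < q \<Longrightarrow> \<exists>w<q. \<sigma> w = x"
    and diagonal: "\<And>i y. i < 3 \<Longrightarrow> y < q \<Longrightarrow>
      \<exists>T\<in>S. point q i y \<in> T \<and> point q (Suc i mod 3) (\<sigma> ((y + y) mod q)) \<in> T"
begin

lemma quasigroup_triples_next_layer:
  assumes "i < 3" "y < q" "x < q"
  shows "\<exists>T\<in>quasigroup_triples q \<sigma> \<union> S. point q i y \<in> T \<and> point q (Suc i mod 3) x \<in> T"
proof -
  obtain w where "w < q" "\<sigma> w = x"
    using \<sigma>_onto \<open>x < q\<close> by blast
  define z where "z = (w + q - y) mod q"
  have "z < q"
    using \<open>y < q\<close> by (simp add: z_def)
  have "(y + z) mod q = (y + (w + q - y)) mod q"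
    by (simp add: z_def mod_add_right_eq)
  also have "y + (w + q - y) = w + q"
    using \<open>y < q\<close> by simp
  finally have "\<sigma> ((y + z) mod q) = x"
    using \<open>w < q\<close> \<open>\<sigma> w = x\<close> by simp
  then show ?thesis
    using diagonal[OF \<open>i < 3\<close> \<open>y < q\<close>] quasigroup_triple_mem[OF \<open>i < 3\<close> \<open>y < q\<close> \<open>z < q\<close>]
    by (cases "z = y") auto
qed

lemma covers_pairs_quasigroup_triples: "covers_pairs {0..<3 * q} (quasigroup_triples q \<sigma> \<union> S)"
  unfolding covers_pairs_def
proof (intro ballI impI)
  fix a b assume "a \<in> {0..<3 * q}" "b \<in> {0..<3 * q}" "a \<noteq> b"
  then obtain i y j x where ij: "i < 3" "j < 3" and yx: "y < q" "x < q"
    and ab: "a = point q i y" "b = point q j x"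
    by (metis atLeastLessThan_iff point_cases)
  consider "i = j" | "j = Suc i mod 3" | "i = Suc j mod 3"
    using next_layer_cases[OF ij] by blast
  then show "\<exists>T\<in>quasigroup_triples q \<sigma> \<union> S. a \<in> T \<and> b \<in> T"
  proof cases
    case 1
    with ab \<open>a \<noteq> b\<close> have "y \<noteq> x"
      by auto
    with quasigroup_triple_mem[OF ij(1) yx, of \<sigma>]
    have "{point q i y, point q i x, point q (Suc i mod 3) (\<sigma> ((y + x) mod q))} \<in> quasigroup_triples q \<sigma> \<union> S"
      by blast
    then show ?thesis
      by (rule bexI[rotated]) (simp add: ab 1)
  next
    case 2
    then show ?thesis
      using quasigroup_triples_next_layer[OF ij(1) yx] ab by blast
  next
    case 3
    then show ?thesis
      using quasigroup_triples_next_layer[OF ij(2) yx(2,1)] ab by blast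
  qed
qed

end

definition columns :: "nat \<Rightarrow> nat \<Rightarrow> nat set set" where
  "columns q k = (\<lambda>x. {point q 0 x, point q 1 x, point q 2 x}) ` {..<k}"

lemma columns_subset_nsets:
  assumes "k \<le> q" "3 * q \<le> M"
  shows "columns q k \<subseteq> [{0..<M}]\<^bsup>3\<^esup>"
proof
  fix T assume "T \<in> columns q k"
  then obtain x where "x < k" and T: "T = {point q 0 x, point q 1 x, point q 2 x}"
    unfolding columns_def by auto
  then have "x < q"
    using assms(1) by linarith
  then have "point q i x < M" if "i < 3" for i
    using point_less[OF that \<open>x < q\<close>] assms(2) by linarith
  then show "T \<in> [{0..<M}]\<^bsup>3\<^esup>"
    using \<open>x < q\<close> by (simp add: T nsets_def)
qed

lemma column_through:
  assumes "x < k" "i < 3" "j < 3"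
  shows "\<exists>T\<in>columns q k. point q i x \<in> T \<and> point q j x \<in> T"
proof
  show "{point q 0 x, point q 1 x, point q 2 x} \<in> columns q k"
    unfolding columns_def using assms(1) by blast
  have "i \<in> {0, 1, 2}" "j \<in> {0, 1, 2}"
    using assms(2,3) by auto
  then show "point q i x \<in> {point q 0 x, point q 1 x, point q 2 x} \<and>
      point q j x \<in> {point q 0 x, point q 1 x, point q 2 x}"
    by auto
qed

lemma card_columns: "card (columns q k) \<le> k"
  unfolding columns_def by (rule order_trans[OF card_image_le]) simp_all

definition halve_odd :: "nat \<Rightarrow> nat \<Rightarrow> nat" where
  "halve_odd q w = w * ((q + 1) div 2) mod q"

lemma halve_odd_double:
  fixes q :: nat
  assumes "odd q" "y < q"
  shows "halve_odd q ((y + y) mod q) = y"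
proof -
  have "(y + y) * ((q + 1) div 2) = y + y * q"
    using assms(1) by (auto simp: algebra_simps elim!: oddE)
  then show ?thesis
    using assms(2) by (simp add: halve_odd_def mod_mult_left_eq)
qed

lemma pair_covering_3q_odd:
  fixes q :: nat
  assumes "odd q"
  shows "\<exists>R. pair_covering {0..<3 * q} R \<and> 6 * card R \<le> 3 * q * (3 * q - 1)"
proof (intro exI conjI)
  let ?R = "quasigroup_triples q (halve_odd q) \<union> columns q q"
  have "q > 0"
    using assms by (cases q) auto
  have "covers_pairs {0..<3 * q} ?R"
  proof (rule covers_pairs_quasigroup_triples)
    fix x assume "x < q"
    then show "\<exists>w<q. halve_odd q w = x"
      using assms halve_odd_double by (metis mod_less_divisor \<open>q > 0\<close>)
  next
    fix i y :: nat assume "i < 3" "y < q"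
    then show "\<exists>T\<in>columns q q. point q i y \<in> T \<and> point q (Suc i mod 3) (halve_odd q ((y + y) mod q)) \<in> T"
      using column_through[of y q i "Suc i mod 3"] halve_odd_double[OF assms] by simp
  qed
  moreover have "?R \<subseteq> [{0..<3 * q}]\<^bsup>3\<^esup>"
    using quasigroup_triples_subset_nsets[of q "halve_odd q"] columns_subset_nsets[of q q "3 * q"] \<open>q > 0\<close>
    by (auto simp: halve_odd_def)
  ultimately show "pair_covering {0..<3 * q} ?R"
    by (simp add: pair_covering_def)
  have "card ?R \<le> card (quasigroup_triples q (halve_odd q)) + q"
    using card_Un_le[of "quasigroup_triples q (halve_odd q)" "columns q q"] card_columns[of q q] by linarith
  moreover have "3 * q * (3 * q - 1) = 9 * (q * (q - 1)) + 6 * q"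
    using \<open>q > 0\<close> by (cases q) (simp_all add: algebra_simps)
  ultimately show "6 * card ?R \<le> 3 * q * (3 * q - 1)"
    using card_quasigroup_triples[of q "halve_odd q"] by linarith
qed

definition halve_even :: "nat \<Rightarrow> nat \<Rightarrow> nat" where
  "halve_even k w = w div 2 + k * (w mod 2)"

lemma halve_even_onto:
  assumes "x < 2 * k"
  shows "\<exists>w<2 * k. halve_even k w = x"
proof (cases "x < k")
  case True
  then show ?thesis
    by (intro exI[of _ "2 * x"]) (simp add: halve_even_def)
next
  case False
  then show ?thesis
    using assms by (intro exI[of _ "2 * (x - k) + 1"]) (simp add: halve_even_def)
qed

lemma halve_even_less:
  assumes "w < 2 * k"
  shows "halve_even k w < 2 * k"
proof -
  have "w div 2 < k"
    using assms by (simp add: less_mult_imp_div_less mult.commute)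
  moreover have "w mod 2 = 0 \<or> w mod 2 = 1"
    by presburger
  ultimately show ?thesis
    by (auto simp: halve_even_def)
qed

lemma halve_even_double:
  assumes "y < 2 * k"
  shows "halve_even k ((y + y) mod (2 * k)) = y mod k"
proof (cases "y < k")
  case True
  then show ?thesis
    by (simp add: halve_even_def)
next
  case False
  then have "(y + y) mod (2 * k) = 2 * (y - k)" "y mod k = y - k"
    using assms by (simp_all add: le_mod_geq)
  then show ?thesis
    by (simp add: halve_even_def)
qed

lemma mod_cases_less_double:
  fixes y k :: nat
  assumes "y < 2 * k"
  shows "y = y mod k \<or> y = y mod k + k"
  using assms by (cases "y < k") (simp_all add: le_mod_geq)

definition column_pair_triples :: "nat \<Rightarrow> nat set set" where
  "column_pair_triples k =
     (\<lambda>(i, x). {point (2 * k) i x, point (2 * k) i (x + k), point (2 * k) (Suc i mod 3) x})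
       ` ({..<3} \<times> {..<k})"

definition infinity_triples :: "nat \<Rightarrow> nat set set" where
  "infinity_triples k =
     (\<lambda>(i, x). {6 * k, point (2 * k) i (x + k), point (2 * k) (Suc i mod 3) x}) ` ({..<3} \<times> {..<k})"

lemma card_column_pair_triples: "card (column_pair_triples k) \<le> 3 * k"
  unfolding column_pair_triples_def by (rule order_trans[OF card_image_le]) (simp_all add: card_cartesian_product)

lemma card_infinity_triples: "card (infinity_triples k) \<le> 3 * k"
  unfolding infinity_triples_def by (rule order_trans[OF card_image_le]) (simp_all add: card_cartesian_product)

lemma column_pair_triples_subset_nsets: "column_pair_triples k \<subseteq> [{0..<6 * k}]\<^bsup>3\<^esup>"
proof
  fix T assume "T \<in> column_pair_triples k"
  then obtain i x where ix: "i < 3" "x < k"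
    and T: "T = {point (2 * k) i x, point (2 * k) i (x + k), point (2 * k) (Suc i mod 3) x}"
    unfolding column_pair_triples_def by auto
  have "Suc i mod 3 \<noteq> i" "Suc i mod 3 < 3"
    using ix(1) by presburger+
  then show "T \<in> [{0..<6 * k}]\<^bsup>3\<^esup>"
    using ix point_less[of i _ "2 * k"] point_less[of "Suc i mod 3" _ "2 * k"]
    by (auto simp: T nsets_def card_insert_if)
qed

lemma infinity_triples_subset_nsets: "infinity_triples k \<subseteq> [{0..<6 * k + 1}]\<^bsup>3\<^esup>"
proof
  fix T assume "T \<in> infinity_triples k"
  then obtain i x where ix: "i < 3" "x < k"
    and T: "T = {6 * k, point (2 * k) i (x + k), point (2 * k) (Suc i mod 3) x}"
    unfolding infinity_triples_def by auto
  have "Suc i mod 3 \<noteq> i" "Suc i mod 3 < 3"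
    using ix(1) by presburger+
  then show "T \<in> [{0..<6 * k + 1}]\<^bsup>3\<^esup>"
    using ix point_less[of i "x + k" "2 * k"] point_less[of "Suc i mod 3" x "2 * k"]
    by (auto simp: T nsets_def card_insert_if)
qed

lemma covers_pairs_insert:
  assumes "covers_pairs V R" "\<And>a. a \<in> V \<Longrightarrow> \<exists>T\<in>R. p \<in> T \<and> a \<in> T"
  shows "covers_pairs (insert p V) R"
  using assms unfolding covers_pairs_def by blast

lemma quasigroup_triples_halve_even_subset_nsets:
  "quasigroup_triples (2 * k) (halve_even k) \<subseteq> [{0..<6 * k}]\<^bsup>3\<^esup>"
  using quasigroup_triples_subset_nsets[of "2 * k" "halve_even k", OF halve_even_less] by simp

lemma column_pair_triples_diagonal:
  assumes "i < 3" "y < 2 * k"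
  shows "\<exists>T\<in>column_pair_triples k. point (2 * k) i y \<in> T \<and> point (2 * k) (Suc i mod 3) (y mod k) \<in> T"
proof -
  define x where "x = y mod k"
  have "x < k"
    unfolding x_def using \<open>y < 2 * k\<close> by simp
  then have triple: "{point (2 * k) i x, point (2 * k) i (x + k), point (2 * k) (Suc i mod 3) x}
      \<in> column_pair_triples k"
    unfolding column_pair_triples_def using \<open>i < 3\<close> by (intro image_eqI[where x = "(i, x)"]) simp_all
  have "y = x \<or> y = x + k"
    unfolding x_def using \<open>y < 2 * k\<close> by (rule mod_cases_less_double)
  then have y_mem: "point (2 * k) i y \<in> {point (2 * k) i x, point (2 * k) i (x + k), point (2 * k) (Suc i mod 3) x}"
    by auto
  show ?thesis
    unfolding x_def[symmetric] by (rule bexI[OF _ triple]) (use y_mem in simp)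
qed

lemma pair_covering_6k: "\<exists>R. pair_covering {0..<6 * k} R \<and> 6 * card R \<le> 6 * k * (6 * k)"
proof (intro exI conjI)
  let ?Q = "quasigroup_triples (2 * k) (halve_even k)"
  let ?R = "?Q \<union> column_pair_triples k"
  have "covers_pairs {0..<3 * (2 * k)} ?R"
  proof (rule covers_pairs_quasigroup_triples)
    show "\<exists>w<2 * k. halve_even k w = x" if "x < 2 * k" for x
      using that by (rule halve_even_onto)
    show "\<exists>T\<in>column_pair_triples k.
        point (2 * k) i y \<in> T \<and> point (2 * k) (Suc i mod 3) (halve_even k ((y + y) mod (2 * k))) \<in> T"
      if "i < 3" "y < 2 * k" for i y
      unfolding halve_even_double[OF that(2)] using that by (rule column_pair_triples_diagonal)
  qed
  moreover have "?R \<subseteq> [{0..<6 * k}]\<^bsup>3\<^esup>"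
    using quasigroup_triples_halve_even_subset_nsets column_pair_triples_subset_nsets by blast
  ultimately show "pair_covering {0..<6 * k} ?R"
    by (simp add: pair_covering_def)
  have "card ?R \<le> card ?Q + 3 * k"
    using card_Un_le[of ?Q "column_pair_triples k"] card_column_pair_triples[of k] by linarith
  moreover have "3 * (2 * k) * (2 * k - 1) + 6 * k = 12 * (k * k)" "6 * k * (6 * k) = 36 * (k * k)"
    by (cases k) (simp_all add: algebra_simps)
  ultimately show "6 * card ?R \<le> 6 * k * (6 * k)"
    using card_quasigroup_triples[of "2 * k" "halve_even k"] by linarith
qed

lemma infinity_triple_mem:
  "i < 3 \<Longrightarrow> x < k \<Longrightarrow> {6 * k, point (2 * k) i (x + k), point (2 * k) (Suc i mod 3) x} \<in> infinity_triples k"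
  unfolding infinity_triples_def by (intro image_eqI[where x = "(i, x)"]) simp_all

lemma columns_infinity_triples_diagonal:
  assumes "i < 3" "y < 2 * k"
  shows "\<exists>T\<in>columns (2 * k) k \<union> infinity_triples k.
    point (2 * k) i y \<in> T \<and> point (2 * k) (Suc i mod 3) (y mod k) \<in> T"
proof (cases "y < k")
  case True
  have "\<exists>T\<in>columns (2 * k) k. point (2 * k) i y \<in> T \<and> point (2 * k) (Suc i mod 3) y \<in> T"
    by (rule column_through) (use True \<open>i < 3\<close> in simp_all)
  then show ?thesis
    using True by auto
next
  case False
  define x where "x = y - k"
  have "x < k" "y = x + k" "y mod k = x"
    using False \<open>y < 2 * k\<close> by (simp_all add: x_def le_mod_geq)
  then show ?thesis
    using infinity_triple_mem[OF \<open>i < 3\<close> \<open>x < k\<close>] by (intro bexI[OF _ UnI2]) simp_all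
qed

lemma infinity_triples_through_infinity:
  assumes "a < 6 * k"
  shows "\<exists>T\<in>infinity_triples k. 6 * k \<in> T \<and> a \<in> T"
proof -
  obtain i y where "i < 3" "y < 2 * k" and a: "a = point (2 * k) i y"
    using point_cases[of a "2 * k"] assms by auto
  show ?thesis
  proof (cases "y < k")
    case True
    have "Suc ((i + 2) mod 3) mod 3 = i"
      using \<open>i < 3\<close> by presburger
    then have "{6 * k, point (2 * k) ((i + 2) mod 3) (y + k), a} \<in> infinity_triples k"
      using infinity_triple_mem[of "(i + 2) mod 3" y k] True a by simp
    then show ?thesis
      by (rule bexI[rotated]) simp
  next
    case False
    define x where "x = y - k"
    have "x < k" "y = x + k"
      using False \<open>y < 2 * k\<close> by (simp_all add: x_def)
    then have "{6 * k, a, point (2 * k) (Suc i mod 3) x} \<in> infinity_triples k"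
      using infinity_triple_mem[OF \<open>i < 3\<close>, of x k] a by simp
    then show ?thesis
      by (rule bexI[rotated]) simp
  qed
qed

lemma pair_covering_6k_plus_1:
  "\<exists>R. pair_covering {0..<6 * k + 1} R \<and> 6 * card R \<le> (6 * k + 1) * (6 * k)"
proof (intro exI conjI)
  let ?Q = "quasigroup_triples (2 * k) (halve_even k)"
  let ?S = "columns (2 * k) k \<union> infinity_triples k"
  let ?R = "?Q \<union> ?S"
  have "covers_pairs {0..<3 * (2 * k)} ?R"
  proof (rule covers_pairs_quasigroup_triples)
    show "\<exists>w<2 * k. halve_even k w = x" if "x < 2 * k" for x
      using that by (rule halve_even_onto)
    show "\<exists>T\<in>?S. point (2 * k) i y \<in> T \<and> point (2 * k) (Suc i mod 3) (halve_even k ((y + y) mod (2 * k))) \<in> T"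
      if "i < 3" "y < 2 * k" for i y
      unfolding halve_even_double[OF that(2)] using that by (rule columns_infinity_triples_diagonal)
  qed
  then have "covers_pairs {0..<6 * k} ?R"
    by simp
  then have "covers_pairs (insert (6 * k) {0..<6 * k}) ?R"
  proof (rule covers_pairs_insert)
    show "\<exists>T\<in>?R. 6 * k \<in> T \<and> a \<in> T" if "a \<in> {0..<6 * k}" for a
      using infinity_triples_through_infinity[of a k] that by auto
  qed
  moreover have "{0..<6 * k + 1} = insert (6 * k) {0..<6 * k}"
    by auto
  moreover have "[{0..<6 * k}]\<^bsup>3\<^esup> \<subseteq> [{0..<6 * k + 1}]\<^bsup>3\<^esup>"
    by (rule nsets_mono) auto
  then have "?R \<subseteq> [{0..<6 * k + 1}]\<^bsup>3\<^esup>"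
    using quasigroup_triples_halve_even_subset_nsets columns_subset_nsets[of k "2 * k" "6 * k + 1"]
      infinity_triples_subset_nsets by auto
  ultimately show "pair_covering {0..<6 * k + 1} ?R"
    by (simp add: pair_covering_def)
  have "card ?R \<le> card ?Q + k + 3 * k"
    using card_Un_le[of ?Q ?S] card_Un_le[of "columns (2 * k) k" "infinity_triples k"]
      card_columns[of "2 * k" k] card_infinity_triples[of k] by linarith
  moreover have "3 * (2 * k) * (2 * k - 1) + 6 * k = 12 * (k * k)" "(6 * k + 1) * (6 * k) = 36 * (k * k) + 6 * k"
    by (cases k) (simp_all add: algebra_simps)
  ultimately show "6 * card ?R \<le> (6 * k + 1) * (6 * k)"
    using card_quasigroup_triples[of "2 * k" "halve_even k"] by linarith
qed

lemma six_times_choose_3: "6 * ((t + 2) choose 3) = (t + 2) * (t + 1) * t"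
proof (induction t)
  case (Suc t)
  have "Suc t + 2 choose 3 = ((t + 2) choose 2) + ((t + 2) choose 3)"
    by (simp add: numeral_3_eq_3 numeral_2_eq_2)
  moreover have "2 * ((t + 2) choose 2) = (t + 2) * (t + 1)"
    by (simp add: choose_two)
  ultimately show ?case
    using Suc by (simp add: algebra_simps)
qed (simp add: numeral_3_eq_3)

lemma exists_star_trace_free_of_pair_covering:
  assumes R: "pair_covering {0..<t + 2} R" and "t > 0" and dvd: "(t + 2) dvd n"
  shows "\<exists>H. uniform_hypergraph n 3 H \<and> \<not> contains_trace H (star_V t) (star_E t)
           \<and> card H = n div (t + 2) * ((t + 2 choose 3) - card R)"
proof (intro exI conjI)
  let ?B = "[{0..<t + 2}]\<^bsup>3\<^esup> - R"
  let ?H = "disjoint_copies (t + 2) (n div (t + 2)) ?B"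
  have "?H \<subseteq> [{0..<n div (t + 2) * (t + 2)}]\<^bsup>3\<^esup>"
    by (rule disjoint_copies_subset_nsets) blast
  then show "uniform_hypergraph n 3 ?H"
    unfolding uniform_hypergraph_iff_nsets dvd_div_mult_self[OF dvd] .
  show "\<not> contains_trace ?H (star_V t) (star_E t)"
    using star_trace_free_disjoint_copies[OF R \<open>t > 0\<close>] .
  have "R \<subseteq> [{0..<t + 2}]\<^bsup>3\<^esup>"
    using R by (simp add: pair_covering_def)
  then have "card ?B = (t + 2 choose 3) - card R"
    by (simp add: card_Diff_subset finite_subset[OF _ finite_imp_finite_nsets])
  then show "card ?H = n div (t + 2) * ((t + 2 choose 3) - card R)"
    using card_disjoint_copies[of ?B "t + 2" 3 "n div (t + 2)"] by simp
qed

lemma ex_trace_eqI: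
  assumes max: "\<And>H. uniform_hypergraph n r H \<Longrightarrow> \<not> contains_trace H VF EF \<Longrightarrow> card H \<le> card H\<^sub>0"
    and "uniform_hypergraph n r H\<^sub>0" "\<not> contains_trace H\<^sub>0 VF EF"
  shows "ex_trace r n VF EF = card H\<^sub>0"
  unfolding ex_trace_def
proof (rule Max_eqI)
  have "{card H |H. uniform_hypergraph n r H \<and> \<not> contains_trace H VF EF} \<subseteq> card ` Pow (Pow {0..<n})"
    unfolding uniform_hypergraph_def by auto
  then show "finite {card H |H. uniform_hypergraph n r H \<and> \<not> contains_trace H VF EF}"
    by (rule finite_subset) simp
qed (use assms in auto)

lemma ex_trace_star_eq:
  assumes "t > 0" "(t + 2) dvd n" "pair_covering {0..<t + 2} R"
    and R_small: "6 * card R + (t + 2) * X \<le> (t + 2) * (t + 1) * t"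
    and upper: "\<And>H. uniform_hypergraph n 3 H \<Longrightarrow> \<not> contains_trace H (star_V t) (star_E t) \<Longrightarrow>
      6 * card H \<le> n * X"
  shows "6 * ex_trace 3 n (star_V t) (star_E t) = n * X"
proof -
  obtain H\<^sub>0 where H\<^sub>0: "uniform_hypergraph n 3 H\<^sub>0" "\<not> contains_trace H\<^sub>0 (star_V t) (star_E t)"
    and card_H\<^sub>0: "card H\<^sub>0 = n div (t + 2) * ((t + 2 choose 3) - card R)"
    using exists_star_trace_free_of_pair_covering[OF assms(3,1,2)] by blast
  have "(t + 2) * X \<le> 6 * ((t + 2 choose 3) - card R)"
    using R_small six_times_choose_3[of t] by (simp add: diff_mult_distrib2)
  have "n = n div (t + 2) * (t + 2)"
    using \<open>(t + 2) dvd n\<close> by (rule dvd_div_mult_self[symmetric])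
  then have "n * X = n div (t + 2) * ((t + 2) * X)"
    by (metis mult.assoc)
  also have "\<dots> \<le> n div (t + 2) * (6 * ((t + 2 choose 3) - card R))"
    using \<open>(t + 2) * X \<le> _\<close> by (rule mult_left_mono) simp
  also have "\<dots> = 6 * card H\<^sub>0"
    by (simp add: card_H\<^sub>0)
  finally have eq: "6 * card H\<^sub>0 = n * X"
    using upper[OF H\<^sub>0] by simp
  have "ex_trace 3 n (star_V t) (star_E t) = card H\<^sub>0"
    using upper eq H\<^sub>0 by (intro ex_trace_eqI) fastforce+
  then show ?thesis
    using eq by simp
qed

lemma ex_trace_star_0_mod_6:
  assumes "(t + 2) mod 6 = 0" and dvd: "(t + 2) dvd n"
  shows "6 * ex_trace 3 n (star_V t) (star_E t) = n * (t\<^sup>2 - 2)"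
proof -
  obtain k where k: "t + 2 = 6 * k"
    using assms(1) by (metis mod_0_imp_dvd dvdE)
  then have "t > 0" "even t" "2 \<le> t"
    by presburger+
  define s where "s = t - 2"
  have s: "t = s + 2"
    using \<open>2 \<le> t\<close> by (simp add: s_def)
  obtain R where "pair_covering {0..<6 * k} R" "6 * card R \<le> 6 * k * (6 * k)"
    using pair_covering_6k by blast
  show ?thesis
  proof (rule ex_trace_star_eq[OF \<open>t > 0\<close> dvd])
    show "pair_covering {0..<t + 2} R"
      unfolding k by fact
    have "6 * card R \<le> (t + 2) * (t + 2)"
      using \<open>6 * card R \<le> 6 * k * (6 * k)\<close> unfolding k .
    moreover have "(t + 2) * (t + 2) + (t + 2) * (t\<^sup>2 - 2) = (t + 2) * (t + 1) * t"
      by (simp add: s power2_eq_square algebra_simps)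
    ultimately show "6 * card R + (t + 2) * (t\<^sup>2 - 2) \<le> (t + 2) * (t + 1) * t"
      by linarith
  next
    fix H assume H: "uniform_hypergraph n 3 H" and free: "\<not> contains_trace H (star_V t) (star_E t)"
    show "6 * card H \<le> n * (t\<^sup>2 - 2)"
    proof (rule card_le_if_degree_le[OF H])
      fix c
      have "2 * card {e\<in>H. c \<in> e} \<le> t\<^sup>2 - 1"
        by (rule star_trace_free_degree_le[OF H free \<open>t > 0\<close>])
      moreover have "even (t\<^sup>2)"
        using \<open>even t\<close> by simp
      ultimately show "2 * card {e\<in>H. c \<in> e} \<le> t\<^sup>2 - 2"
        by presburger
    qed
  qed
qed

lemma pair_covering_1_3_mod_6:
  assumes "m mod 6 = 1 \<or> m mod 6 = 3"
  shows "\<exists>R. pair_covering {0..<m} R \<and> 6 * card R \<le> m * (m - 1)"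
proof (cases "m mod 6 = 1")
  case True
  define k where "k = m div 6"
  have m: "m = 6 * k + 1"
    unfolding k_def using True div_mult_mod_eq[of m 6] by linarith
  show ?thesis
    unfolding m using pair_covering_6k_plus_1[of k] by simp
next
  case False
  then have "m mod 6 = 3"
    using assms by simp
  define d where "d = m div 6"
  have "m = 6 * d + 3"
    unfolding d_def using \<open>m mod 6 = 3\<close> div_mult_mod_eq[of m 6] by linarith
  then have "m = 3 * (2 * d + 1)"
    by simp
  then show ?thesis
    using pair_covering_3q_odd[of "2 * d + 1"] by simp
qed

lemma ex_trace_star_1_3_mod_6:
  assumes "(t + 2) mod 6 = 1 \<or> (t + 2) mod 6 = 3" and dvd: "(t + 2) dvd n" and "t > 0"
  shows "6 * ex_trace 3 n (star_V t) (star_E t) = n * (t\<^sup>2 - 1)"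
proof -
  obtain R where R: "pair_covering {0..<t + 2} R" "6 * card R \<le> (t + 2) * (t + 1)"
    using pair_covering_1_3_mod_6[OF assms(1)] by auto
  show ?thesis
  proof (rule ex_trace_star_eq[OF \<open>t > 0\<close> dvd R(1)])
    have "(t + 2) * (t + 1) + (t + 2) * (t\<^sup>2 - 1) = (t + 2) * (t + 1) * t"
      using \<open>t > 0\<close> by (cases t) (simp_all add: power2_eq_square algebra_simps)
    then show "6 * card R + (t + 2) * (t\<^sup>2 - 1) \<le> (t + 2) * (t + 1) * t"
      using R(2) by linarith
  next
    fix H assume H: "uniform_hypergraph n 3 H" and free: "\<not> contains_trace H (star_V t) (star_E t)"
    show "6 * card H \<le> n * (t\<^sup>2 - 1)"
      using star_trace_free_degree_le[OF H free \<open>t > 0\<close>] by (rule card_le_if_degree_le[OF H])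
  qed
qed

theorem mainTheorem2:
  fixes t n :: nat
  assumes "t > 0" and "n > 0"
  shows "((t + 2) mod 6 = 0 \<and> (t + 2) dvd n \<longrightarrow>
            real (ex_trace 3 n (star_V t) (star_E t)) = real n / 6 * (real t ^ 2 - 2))
       \<and> (((t + 2) mod 6 = 1 \<or> (t + 2) mod 6 = 3) \<and> (t + 2) dvd n \<longrightarrow>
            real (ex_trace 3 n (star_V t) (star_E t)) = real n / 6 * (real t ^ 2 - 1))"
proof (intro conjI impI; elim conjE)
  assume "(t + 2) mod 6 = 0" "(t + 2) dvd n"
  then have "real (6 * ex_trace 3 n (star_V t) (star_E t)) = real (n * (t\<^sup>2 - 2))"
    by (simp only: ex_trace_star_0_mod_6)
  moreover have "2 \<le> t\<^sup>2"
  proof -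
    have "2 \<le> t"
      using \<open>(t + 2) mod 6 = 0\<close> \<open>t > 0\<close> by presburger
    then have "2 * 1 \<le> t * t"
      by (intro mult_le_mono) simp_all
    then show ?thesis
      by (simp add: power2_eq_square)
  qed
  ultimately show "real (ex_trace 3 n (star_V t) (star_E t)) = real n / 6 * (real t ^ 2 - 2)"
    by (simp add: of_nat_diff)
next
  assume "(t + 2) mod 6 = 1 \<or> (t + 2) mod 6 = 3" "(t + 2) dvd n"
  then have "real (6 * ex_trace 3 n (star_V t) (star_E t)) = real (n * (t\<^sup>2 - 1))"
    using \<open>t > 0\<close> by (simp only: ex_trace_star_1_3_mod_6)
  moreover have "1 \<le> t\<^sup>2"
    using \<open>t > 0\<close> by simp
  ultimately show "real (ex_trace 3 n (star_V t) (star_E t)) = real n / 6 * (real t ^ 2 - 1)"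
    by (simp add: of_nat_diff)
qed

end
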